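(* Let $\hat D$ be any element of the algebra of operators on $C(P)$ generated by $\hat T_1,\dots,\hat T_n$, and let $\lambda,\mu\in P$ with $\lambda\sim\mu$. If $(\hat Df)(\lambda)=0$ for all $f\in C(P)$, then $(\hat Df)(\mu)=0$ for all $f\in C(P)$.
   Context: Let $R$ be an irreducible reduced crystallographic root system of rank $n$ in a Euclidean space $V$ with inner product $\langle\cdot,\cdot\rangle$, $\alpha^\vee:=2\alpha/\langle\alpha,\alpha\rangle$, weight lattice $P$, positive roots $R^+$ with simple roots $\alpha_1,\dots,\alpha_n$, finite Weyl group $W_0$ acting on $C(P)$ (functions $P\to\mathbb C$) by $(wf)(\lambda)=f(w^{-1}\lambda)$. $A:=\{x\in V:0<\langle x,\alpha^\vee\rangle<1\ \forall \alpha\in R^+\}$, $C:=\{x:\langle x,\alpha^\vee\rangle>0\ \forall\alpha\in R^+\}$. For $1\le j\le n$, $s_j$ is the reflection in $V_j:=\{x:\langle x,\alpha_j^\vee\rangle=0\}$, $q_j\in\mathbb R\setminus\{0\}$ are parameters, and $\hat T_j:=q_j+\chi_j(s_j-1)$ where $\chi_j$ multiplies by $\chi_j(\lambda)=q_j$ if $V_j$ separates $\lambda$ and $A$, $1$ if $\lambda\in V_j$, $q_j^{-1}$ otherwise. For $x\in V$, $W_{0,x}$ is the stabilizer of $x$ in $W_0$. Write $x\sim y$ iff $W_{0,x}=W_{0,y}$ and $x,y$ both lie in the closure of the same Weyl chamber $wC$ for some $w\in W_0$. *)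

theory Defs
  imports "HOL-Analysis.Analysis"
begin

definition coroot :: "'a::euclidean_space \<Rightarrow> 'a" where
  "coroot \<alpha> = (2 / (\<alpha> \<bullet> \<alpha>)) *\<^sub>R \<alpha>"

definition refl :: "'a::euclidean_space \<Rightarrow> 'a \<Rightarrow> 'a" where
  "refl \<alpha> x = x - (x \<bullet> coroot \<alpha>) *\<^sub>R \<alpha>"

definition root_system :: "'a::euclidean_space set \<Rightarrow> bool" where
  "root_system R \<longleftrightarrow> finite R \<and> 0 \<notin> R \<and> span R = UNIV \<and>
     (\<forall>\<alpha>\<in>R. refl \<alpha> ` R \<subseteq> R) \<and>
     (\<forall>\<alpha>\<in>R. \<forall>\<beta>\<in>R. \<beta> \<bullet> coroot \<alpha> \<in> \<int>)"

definition reduced_rs :: "'a::euclidean_space set \<Rightarrow> bool" where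
  "reduced_rs R \<longleftrightarrow> (\<forall>\<alpha>\<in>R. \<forall>c::real. c *\<^sub>R \<alpha> \<in> R \<longrightarrow> c = 1 \<or> c = -1)"

definition irreducible_rs :: "'a::euclidean_space set \<Rightarrow> bool" where
  "irreducible_rs R \<longleftrightarrow> \<not> (\<exists>R1 R2. R1 \<noteq> {} \<and> R2 \<noteq> {} \<and> R1 \<union> R2 = R \<and> R1 \<inter> R2 = {} \<and>
        (\<forall>a\<in>R1. \<forall>b\<in>R2. a \<bullet> b = 0))"

definition is_base :: "'a::euclidean_space set \<Rightarrow> nat \<Rightarrow> (nat \<Rightarrow> 'a) \<Rightarrow> bool" where
  "is_base R n alpha \<longleftrightarrow> inj_on alpha {1..n} \<and> alpha ` {1..n} \<subseteq> R \<and>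
     independent (alpha ` {1..n}) \<and>
     (\<forall>\<beta>\<in>R. \<exists>k::nat \<Rightarrow> int. \<beta> = (\<Sum>j=1..n. of_int (k j) *\<^sub>R alpha j) \<and>
        ((\<forall>j\<in>{1..n}. k j \<ge> 0) \<or> (\<forall>j\<in>{1..n}. k j \<le> 0)))"

definition pos_roots :: "'a::euclidean_space set \<Rightarrow> nat \<Rightarrow> (nat \<Rightarrow> 'a) \<Rightarrow> 'a set" where
  "pos_roots R n alpha = {\<beta>\<in>R. \<exists>k::nat \<Rightarrow> int. (\<forall>j\<in>{1..n}. k j \<ge> 0) \<and>
        \<beta> = (\<Sum>j=1..n. of_int (k j) *\<^sub>R alpha j)}"

definition weight_lattice :: "'a::euclidean_space set \<Rightarrow> 'a set" where
  "weight_lattice R = {x. \<forall>\<alpha>\<in>R. x \<bullet> coroot \<alpha> \<in> \<int>}"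

inductive_set weyl_group :: "'a::euclidean_space set \<Rightarrow> ('a \<Rightarrow> 'a) set" for R where
  id: "id \<in> weyl_group R"
| step: "w \<in> weyl_group R \<Longrightarrow> \<alpha> \<in> R \<Longrightarrow> refl \<alpha> \<circ> w \<in> weyl_group R"

definition alcove :: "'a::euclidean_space set \<Rightarrow> 'a set" where
  "alcove Rp = {x. \<forall>\<alpha>\<in>Rp. 0 < x \<bullet> coroot \<alpha> \<and> x \<bullet> coroot \<alpha> < 1}"

definition chamber :: "'a::euclidean_space set \<Rightarrow> 'a set" where
  "chamber Rp = {x. \<forall>\<alpha>\<in>Rp. 0 < x \<bullet> coroot \<alpha>}"

definition stabilizer :: "('a \<Rightarrow> 'a) set \<Rightarrow> 'a \<Rightarrow> ('a \<Rightarrow> 'a) set" where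
  "stabilizer W x = {w\<in>W. w x = x}"

definition wsim :: "('a::euclidean_space \<Rightarrow> 'a) set \<Rightarrow> 'a set \<Rightarrow> 'a \<Rightarrow> 'a \<Rightarrow> bool" where
  "wsim W C x y \<longleftrightarrow> stabilizer W x = stabilizer W y \<and>
     (\<exists>w\<in>W. x \<in> closure (w ` C) \<and> y \<in> closure (w ` C))"

definition separates :: "'a::euclidean_space \<Rightarrow> 'a \<Rightarrow> 'a set \<Rightarrow> bool" where
  "separates v y S \<longleftrightarrow> (y \<bullet> v < 0 \<and> (\<forall>a\<in>S. a \<bullet> v > 0)) \<or> (y \<bullet> v > 0 \<and> (\<forall>a\<in>S. a \<bullet> v < 0))"

definition chi :: "(nat \<Rightarrow> real) \<Rightarrow> (nat \<Rightarrow> 'a::euclidean_space) \<Rightarrow> 'a set \<Rightarrow> nat \<Rightarrow> 'a \<Rightarrow> complex" where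
  "chi q alpha A j x =
     (if separates (coroot (alpha j)) x A then complex_of_real (q j)
      else if x \<bullet> coroot (alpha j) = 0 then 1
      else complex_of_real (inverse (q j)))"

text \<open>hat T_j = q_j + chi_j (s_j - 1), acting on functions P -> C;
  (s_j f)(x) = f (s_j^{-1} x) = f (s_j x).\<close>
definition That :: "(nat \<Rightarrow> real) \<Rightarrow> (nat \<Rightarrow> 'a::euclidean_space) \<Rightarrow> 'a set \<Rightarrow> nat
    \<Rightarrow> ('a \<Rightarrow> complex) \<Rightarrow> ('a \<Rightarrow> complex)" where
  "That q alpha A j f = (\<lambda>x. complex_of_real (q j) * f x
       + chi q alpha A j x * (f (refl (alpha j) x) - f x))"

inductive_set gen_alg :: "(('b \<Rightarrow> complex) \<Rightarrow> ('b \<Rightarrow> complex)) set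
    \<Rightarrow> (('b \<Rightarrow> complex) \<Rightarrow> ('b \<Rightarrow> complex)) set" for G where
  gen: "D \<in> G \<Longrightarrow> D \<in> gen_alg G"
| scal: "(\<lambda>f. (\<lambda>x. c * f x)) \<in> gen_alg G"
| add: "D1 \<in> gen_alg G \<Longrightarrow> D2 \<in> gen_alg G \<Longrightarrow> (\<lambda>f. (\<lambda>x. D1 f x + D2 f x)) \<in> gen_alg G"
| smult: "D \<in> gen_alg G \<Longrightarrow> (\<lambda>f. (\<lambda>x. c * D f x)) \<in> gen_alg G"
| comp: "D1 \<in> gen_alg G \<Longrightarrow> D2 \<in> gen_alg G \<Longrightarrow> (\<lambda>f. D1 (D2 f)) \<in> gen_alg G"

end

theory Submission
  imports Defs
begin

(* Write W for the finite Weyl group and lam ~ mu.  Say that two functions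
   g, f on V are orbit matched if g (w lam) = f (w mu) for every w in W.  The theorem
   follows from two facts:
   (1) every operator in the algebra generated by the T_j maps orbit matched pairs to
       orbit matched pairs;
   (2) since W_lam = W_mu, the assignment w lam |-> w mu is well defined, so every f has
       an orbit matched partner g.
   Then (D f)(mu) = (D g)(lam) = 0.  Fact (1) reduces, by induction over the algebra, to
   the generators, where it amounts to chi_j (w lam) = chi_j (w mu).  Since chi_j only sees
   on which side of the hyperplane V_j a point lies, this follows from the main geometric
   lemma: w lam and w mu lie on the same side of every root hyperplane.  Strict opposite
   sides are excluded because lam, mu lie in the closure of one Weyl chamber, and lying on
   a root hyperplane is the same for both because their stabilizers agree. *)

(* The coroot is a positive multiple of the root, so both define the same hyperplane
   and the same half-spaces. *)
lemma sgn_inner_coroot: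
  assumes "a \<noteq> 0"
  shows "sgn (x \<bullet> coroot a) = sgn (x \<bullet> a)"
proof -
  have "0 < 2 / (a \<bullet> a)" using assms by simp
  then show ?thesis by (simp add: coroot_def sgn_mult)
qed

lemma refl_involutive:
  assumes "a \<noteq> 0"
  shows "refl a (refl a x) = x"
proof -
  have "a \<bullet> coroot a = 2" using assms by (simp add: coroot_def)
  then show ?thesis by (simp add: refl_def algebra_simps)
qed

lemma refl_orthogonal:
  assumes "a \<noteq> 0"
  shows "refl a x \<bullet> refl a y = x \<bullet> y"
  using assms by (simp add: refl_def coroot_def algebra_simps inner_commute)

lemma refl_fixed_iff:
  assumes "a \<noteq> 0"
  shows "refl a x = x \<longleftrightarrow> x \<bullet> a = 0"
proof -
  have "refl a x = x \<longleftrightarrow> x \<bullet> coroot a = 0" using assms by (auto simp: refl_def)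
  also have "\<dots> \<longleftrightarrow> x \<bullet> a = 0" using sgn_inner_coroot[OF assms, of x] by (metis sgn_0_0)
  finally show ?thesis .
qed

lemma weyl_group_comp:
  assumes "w1 \<in> weyl_group R" and "w2 \<in> weyl_group R"
  shows "w1 \<circ> w2 \<in> weyl_group R"
  using assms
proof (induction w1 rule: weyl_group.induct)
  case id
  then show ?case by simp
next
  case (step w \<alpha>)
  then show ?case using weyl_group.step by (metis comp_assoc)
qed

lemma weyl_group_refl: "\<alpha> \<in> R \<Longrightarrow> refl \<alpha> \<in> weyl_group R"
  using weyl_group.step[OF weyl_group.id, of \<alpha>] by simp

lemma weyl_group_inverse:
  assumes "0 \<notin> R" and "w \<in> weyl_group R"
  shows "\<exists>v\<in>weyl_group R. (\<forall>x. v (w x) = x) \<and> (\<forall>x. w (v x) = x)"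
  using assms(2)
proof (induction w rule: weyl_group.induct)
  case id
  show ?case using weyl_group.id[of R] by (intro bexI[of _ id]) auto
next
  case (step w \<alpha>)
  then obtain v where v: "v \<in> weyl_group R" "\<forall>x. v (w x) = x" "\<forall>x. w (v x) = x" by blast
  have "\<alpha> \<noteq> 0" using step.hyps(2) assms(1) by auto
  then have "\<forall>x. (v \<circ> refl \<alpha>) ((refl \<alpha> \<circ> w) x) = x \<and> (refl \<alpha> \<circ> w) ((v \<circ> refl \<alpha>) x) = x"
    using v(2,3) by (simp add: refl_involutive)
  moreover have "v \<circ> refl \<alpha> \<in> weyl_group R"
    using weyl_group_comp[OF v(1) weyl_group_refl[OF step.hyps(2)]] .
  ultimately show ?case by blast
qed

lemma weyl_group_orthogonal:
  assumes "0 \<notin> R" and "w \<in> weyl_group R"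
  shows "w x \<bullet> w y = x \<bullet> y"
  using assms(2)
proof (induction w rule: weyl_group.induct)
  case id
  then show ?case by simp
next
  case (step w \<alpha>)
  have "\<alpha> \<noteq> 0" using step.hyps(2) assms(1) by auto
  then show ?case by (simp add: refl_orthogonal step.IH)
qed

lemma weyl_group_adjoint:
  assumes "0 \<notin> R" and "w \<in> weyl_group R" and "\<forall>x. w (v x) = x"
  shows "w x \<bullet> y = x \<bullet> v y"
  using weyl_group_orthogonal[OF assms(1,2), of x "v y"] assms(3) by simp

lemma weyl_group_preserves_roots:
  assumes "root_system R" and "w \<in> weyl_group R" and "\<beta> \<in> R"
  shows "w \<beta> \<in> R"
  using assms(2,3)
proof (induction w arbitrary: \<beta> rule: weyl_group.induct)
  case id
  then show ?case by simp
next
  case (step w \<alpha>)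
  then have "w \<beta> \<in> R" by blast
  then show ?case using assms(1) step.hyps(2) unfolding root_system_def by auto
qed

(* Every root is positive or negative with respect to a base, hence has constant strict
   sign on the fundamental chamber. *)
lemma chamber_root_sign:
  assumes rs: "root_system R" and base: "is_base R n alpha" and root: "\<gamma> \<in> R"
  defines "C \<equiv> chamber (pos_roots R n alpha)"
  shows "(\<forall>c\<in>C. 0 < c \<bullet> \<gamma>) \<or> (\<forall>c\<in>C. c \<bullet> \<gamma> < 0)"
proof -
  have positive_on_C: "\<forall>c\<in>C. 0 < c \<bullet> \<beta>" if pos: "\<beta> \<in> pos_roots R n alpha" for \<beta>
  proof
    fix c assume "c \<in> C"
    then have "0 < c \<bullet> coroot \<beta>" using pos unfolding C_def chamber_def by blast
    moreover have "\<beta> \<noteq> 0" using pos rs unfolding pos_roots_def root_system_def by blast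
    ultimately show "0 < c \<bullet> \<beta>" using sgn_inner_coroot[of \<beta> c] sgn_greater by metis
  qed
  have "\<gamma> \<noteq> 0" using rs root by (auto simp: root_system_def)
  obtain k :: "nat \<Rightarrow> int" where k: "\<gamma> = (\<Sum>j=1..n. of_int (k j) *\<^sub>R alpha j)"
    "(\<forall>j\<in>{1..n}. k j \<ge> 0) \<or> (\<forall>j\<in>{1..n}. k j \<le> 0)"
    using base root unfolding is_base_def by blast
  from k(2) show ?thesis
  proof
    assume "\<forall>j\<in>{1..n}. k j \<ge> 0"
    then have "\<gamma> \<in> pos_roots R n alpha" using k(1) root unfolding pos_roots_def by blast
    then show ?thesis using positive_on_C by blast
  next
    assume nonpos: "\<forall>j\<in>{1..n}. k j \<le> 0"
    have "refl \<gamma> \<gamma> = - \<gamma>" using \<open>\<gamma> \<noteq> 0\<close> by (simp add: refl_def coroot_def scaleR_2)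
    then have "- \<gamma> \<in> R" using rs root unfolding root_system_def by (metis image_subset_iff)
    moreover have "- \<gamma> = (\<Sum>j=1..n. of_int (- k j) *\<^sub>R alpha j)"
      using k(1) by (simp add: sum_negf[symmetric])
    ultimately have "- \<gamma> \<in> pos_roots R n alpha"
      using nonpos unfolding pos_roots_def by (intro CollectI conjI exI[of _ "\<lambda>j. - k j"]) auto
    then have "\<forall>c\<in>C. c \<bullet> \<gamma> < 0" using positive_on_C[of "- \<gamma>"] by simp
    then show ?thesis by blast
  qed
qed

(* A set lying strictly on one side of a hyperplane through 0 has its closure on that
   side (weakly), so no two points of the closure lie strictly on opposite sides. *)
lemma closure_not_strictly_separated:
  fixes S :: "'a::real_inner set"
  assumes "(\<forall>x\<in>S. 0 < x \<bullet> b) \<or> (\<forall>x\<in>S. x \<bullet> b < 0)"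
    and "y \<in> closure S" and "z \<in> closure S"
  shows "\<not> (0 < y \<bullet> b \<and> z \<bullet> b < 0)"
  using assms(1)
proof
  assume "\<forall>x\<in>S. 0 < x \<bullet> b"
  then have "S \<subseteq> {x. b \<bullet> x \<ge> 0}" by (auto simp: inner_commute less_imp_le)
  then have "closure S \<subseteq> {x. b \<bullet> x \<ge> 0}" by (rule closure_minimal) (rule closed_halfspace_ge)
  then show ?thesis using assms(3) by (auto simp: inner_commute)
next
  assume "\<forall>x\<in>S. x \<bullet> b < 0"
  then have "S \<subseteq> {x. b \<bullet> x \<le> 0}" by (auto simp: inner_commute less_imp_le)
  then have "closure S \<subseteq> {x. b \<bullet> x \<le> 0}" by (rule closure_minimal) (rule closed_halfspace_le)
  then show ?thesis using assms(2) by (auto simp: inner_commute)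
qed

lemma weyl_chamber_root_sign:
  assumes rs: "root_system R" and base: "is_base R n alpha"
    and u: "u \<in> weyl_group R" and root: "\<gamma> \<in> R"
  defines "C \<equiv> chamber (pos_roots R n alpha)"
  shows "(\<forall>x\<in>u ` C. 0 < x \<bullet> \<gamma>) \<or> (\<forall>x\<in>u ` C. x \<bullet> \<gamma> < 0)"
proof -
  have R0: "0 \<notin> R" using rs by (auto simp: root_system_def)
  obtain v where v: "v \<in> weyl_group R" "\<forall>x. u (v x) = x"
    using weyl_group_inverse[OF R0 u] by blast
  have "\<And>c. u c \<bullet> \<gamma> = c \<bullet> v \<gamma>" using weyl_group_adjoint[OF R0 u v(2)] .
  moreover have "v \<gamma> \<in> R" using weyl_group_preserves_roots[OF rs v(1) root] .
  ultimately show ?thesis using chamber_root_sign[OF rs base] unfolding C_def by auto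
qed

(* Points with the same stabilizer have the same W-translates lying on root hyperplanes:
   w x lies on the mirror of a iff x is fixed by w^-1 s_a w. *)
lemma same_stabilizer_same_mirrors:
  assumes R0: "0 \<notin> R"
    and stab: "stabilizer (weyl_group R) lam = stabilizer (weyl_group R) mu"
    and w: "w \<in> weyl_group R" and a: "a \<in> R"
  shows "w lam \<bullet> a = 0 \<longleftrightarrow> w mu \<bullet> a = 0"
proof -
  have a0: "a \<noteq> 0" using a R0 by auto
  obtain v where v: "v \<in> weyl_group R" "\<forall>x. v (w x) = x" "\<forall>x. w (v x) = x"
    using weyl_group_inverse[OF R0 w] by blast
  let ?t = "v \<circ> refl a \<circ> w"
  have t: "?t \<in> weyl_group R"
    using weyl_group_comp[OF weyl_group_comp[OF v(1) weyl_group_refl[OF a]] w] .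
  have fixed: "w x \<bullet> a = 0 \<longleftrightarrow> ?t x = x" for x
    using refl_fixed_iff[OF a0, of "w x"] v(2,3) by (metis comp_apply)
  have "?t lam = lam \<longleftrightarrow> ?t mu = mu" using stab t unfolding stabilizer_def by blast
  then show ?thesis using fixed by blast
qed

lemma wsim_same_side:
  assumes rs: "root_system R" and base: "is_base R n alpha"
    and sim: "wsim (weyl_group R) (chamber (pos_roots R n alpha)) lam mu"
    and w: "w \<in> weyl_group R" and a: "a \<in> R"
  shows "sgn (w lam \<bullet> a) = sgn (w mu \<bullet> a)"
proof -
  have R0: "0 \<notin> R" using rs by (auto simp: root_system_def)
  obtain u where u: "u \<in> weyl_group R"
    "lam \<in> closure (u ` chamber (pos_roots R n alpha))"
    "mu \<in> closure (u ` chamber (pos_roots R n alpha))"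
    using sim unfolding wsim_def by blast
  obtain v where v: "v \<in> weyl_group R" "\<forall>x. w (v x) = x"
    using weyl_group_inverse[OF R0 w] by blast
  have adj: "\<And>x. w x \<bullet> a = x \<bullet> v a" using weyl_group_adjoint[OF R0 w v(2)] .
  have side: "(\<forall>x\<in>u ` chamber (pos_roots R n alpha). 0 < x \<bullet> v a)
      \<or> (\<forall>x\<in>u ` chamber (pos_roots R n alpha). x \<bullet> v a < 0)"
    using weyl_chamber_root_sign[OF rs base u(1) weyl_group_preserves_roots[OF rs v(1) a]] .
  have "\<not> (0 < w lam \<bullet> a \<and> w mu \<bullet> a < 0)" "\<not> (0 < w mu \<bullet> a \<and> w lam \<bullet> a < 0)"
    unfolding adj using closure_not_strictly_separated[OF side] u(2,3) by blast+
  moreover have "w lam \<bullet> a = 0 \<longleftrightarrow> w mu \<bullet> a = 0"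
    using same_stabilizer_same_mirrors[OF R0 _ w a] sim unfolding wsim_def by blast
  ultimately show ?thesis by (auto simp: sgn_real_def)
qed

lemma chi_eq_if_same_side:
  assumes "sgn (x \<bullet> coroot (alpha j)) = sgn (y \<bullet> coroot (alpha j))"
  shows "chi q alpha A j x = chi q alpha A j y"
proof -
  have "x \<bullet> coroot (alpha j) < 0 \<longleftrightarrow> y \<bullet> coroot (alpha j) < 0"
    "0 < x \<bullet> coroot (alpha j) \<longleftrightarrow> 0 < y \<bullet> coroot (alpha j)"
    "x \<bullet> coroot (alpha j) = 0 \<longleftrightarrow> y \<bullet> coroot (alpha j) = 0"
    using assms by (metis sgn_less, metis sgn_greater, metis sgn_0_0)
  then show ?thesis unfolding chi_def separates_def by simp
qed

definition orbit_matched :: "('a \<Rightarrow> 'a) set \<Rightarrow> 'a \<Rightarrow> 'a \<Rightarrow> ('a \<Rightarrow> complex)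
    \<Rightarrow> ('a \<Rightarrow> complex) \<Rightarrow> bool" where
  "orbit_matched W lam mu g f \<longleftrightarrow> (\<forall>w\<in>W. g (w lam) = f (w mu))"

lemma gen_alg_preserves_orbit_matched:
  assumes rs: "root_system R" and base: "is_base R n alpha"
    and sim: "wsim (weyl_group R) (chamber (pos_roots R n alpha)) lam mu"
    and D: "D \<in> gen_alg ((\<lambda>j. That q alpha A j) ` {1..n})"
    and matched: "orbit_matched (weyl_group R) lam mu g f"
  shows "orbit_matched (weyl_group R) lam mu (D g) (D f)"
  using D matched unfolding orbit_matched_def
proof (induction D arbitrary: g f rule: gen_alg.induct)
  case (gen D)
  then obtain j where j: "j \<in> {1..n}" "D = That q alpha A j" by blast
  have aR: "alpha j \<in> R" using base j(1) unfolding is_base_def by blast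
  have "alpha j \<noteq> 0" using aR rs by (auto simp: root_system_def)
  show ?case
  proof
    fix w assume w: "w \<in> weyl_group R"
    have "chi q alpha A j (w lam) = chi q alpha A j (w mu)"
      using chi_eq_if_same_side wsim_same_side[OF rs base sim w aR]
        sgn_inner_coroot[OF \<open>alpha j \<noteq> 0\<close>] by metis
    moreover have "g (refl (alpha j) (w lam)) = f (refl (alpha j) (w mu))"
      using gen.prems weyl_group.step[OF w aR] by auto
    ultimately show "D g (w lam) = D f (w mu)"
      using j(2) gen.prems w unfolding That_def by simp
  qed
next
  case (scal c)
  then show ?case by simp
next
  case (add D1 D2)
  then show ?case by metis
next
  case (smult D c)
  then show ?case by metis
next
  case (comp D1 D2)
  then show ?case by blast
qed

(* Fact (2): when the stabilizers of lam and mu agree, w lam |-> w mu is a well defined map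
   on the orbit of lam, so every f has an orbit matched partner. *)
lemma orbit_matched_partner:
  assumes R0: "0 \<notin> R"
    and stab: "stabilizer (weyl_group R) lam = stabilizer (weyl_group R) mu"
  shows "\<exists>g. orbit_matched (weyl_group R) lam mu g f"
proof -
  define pick where "pick x = (SOME w. w \<in> weyl_group R \<and> w lam = x)" for x
  have "f (pick (w lam) mu) = f (w mu)" if w: "w \<in> weyl_group R" for w
  proof -
    have w': "pick (w lam) \<in> weyl_group R" "pick (w lam) lam = w lam"
      unfolding pick_def by (metis (mono_tags, lifting) someI w)+
    obtain v where v: "v \<in> weyl_group R" "\<forall>x. v (w x) = x" "\<forall>x. w (v x) = x"
      using weyl_group_inverse[OF R0 w] by blast
    have "v \<circ> pick (w lam) \<in> stabilizer (weyl_group R) lam"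
      using weyl_group_comp[OF v(1) w'(1)] w'(2) v(2) by (simp add: stabilizer_def)
    then have "v \<circ> pick (w lam) \<in> stabilizer (weyl_group R) mu" using stab by simp
    then have "v (pick (w lam) mu) = mu" by (simp add: stabilizer_def)
    then show ?thesis using v(3) by metis
  qed
  then show ?thesis unfolding orbit_matched_def by (intro exI[of _ "\<lambda>x. f (pick x mu)"]) simp
qed

theorem mainTheorem2:
  fixes R :: "'a::euclidean_space set" and alpha :: "nat \<Rightarrow> 'a" and q :: "nat \<Rightarrow> real"
    and D :: "('a \<Rightarrow> complex) \<Rightarrow> ('a \<Rightarrow> complex)" and lam mu :: 'a
  assumes "root_system R" and "reduced_rs R" and "irreducible_rs R"
    and "is_base R DIM('a) alpha"
    and "\<forall>j\<in>{1..DIM('a)}. q j \<noteq> 0"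
    and "D \<in> gen_alg ((\<lambda>j. That q alpha (alcove (pos_roots R DIM('a) alpha)) j) ` {1..DIM('a)})"
    and "lam \<in> weight_lattice R" and "mu \<in> weight_lattice R"
    and "wsim (weyl_group R) (chamber (pos_roots R DIM('a) alpha)) lam mu"
    and "\<forall>f. D f lam = 0"
  shows "\<forall>f. D f mu = 0"
proof
  fix f
  have "0 \<notin> R" using assms(1) by (auto simp: root_system_def)
  moreover have "stabilizer (weyl_group R) lam = stabilizer (weyl_group R) mu"
    using assms(9) by (simp add: wsim_def)
  ultimately obtain g where "orbit_matched (weyl_group R) lam mu g f"
    using orbit_matched_partner by blast
  then have "orbit_matched (weyl_group R) lam mu (D g) (D f)"
    using gen_alg_preserves_orbit_matched[OF assms(1,4,9,6)] by blast
  then have "D g lam = D f mu"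
    using weyl_group.id unfolding orbit_matched_def by fastforce
  then show "D f mu = 0" using assms(10) by simp
qed

end
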